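(* Let $d\ge1$, let $\Lambda\subset\mathbb{R}^{2d}$ be a lattice, let $g\in L^2(\mathbb{R}^d)$ be such that $(g,\Lambda)$ induces a frame with frame constants $A,B>0$, and let $\Omega\subset\mathbb{R}^{2d}$ be compact. Then for each $\delta\in(0,1)$, $$\Big|B\,\#\{k:\lambda_k^\Omega>B(1-\delta)\}-\#(\Omega\cap\Lambda)\Vert g\Vert_{L^2}^2\Big|\le\max\Big\{\frac1\delta,\frac1{1-\delta}\Big\}\Big|\#(\Omega\cap\Lambda)\Vert g\Vert_{L^2}^2-\frac1B\sum_{\lambda\in\Omega\cap\Lambda}\sum_{\lambda'\in\Omega\cap\Lambda}|V_gg(\lambda-\lambda')|^2\Big|.$$
   Context: For $z=(x,\omega)\in\mathbb{R}^{2d}$ the time-frequency shift $\pi(z)$ acts on $L^2(\mathbb{R}^d)$ by $\pi(x,\omega)f(t)=e^{2\pi i\omega\cdot t}f(t-x)$, and $V_gf(z)=\langle f,\pi(z)g\rangle$. A lattice is $\Lambda=M\mathbb{Z}^{2d}$ with $M$ an invertible real $2d\times2d$ matrix. $(g,\Lambda)$ induces a frame with frame constants $A,B>0$ if $A\Vert f\Vert_{L^2}^2\le\sum_{\lambda\in\Lambda}|\langle f,\pi(\lambda)g\rangle|^2\le B\Vert f\Vert_{L^2}^2$ for all $f\in L^2(\mathbb{R}^d)$. For compact $\Omega$ the Gabor multiplier is $G^g_{\Omega,\Lambda}f=\sum_{\lambda\in\Lambda}\chi_\Omega(\lambda)V_gf(\lambda)\pi(\lambda)g$; it is a finite-rank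 positive self-adjoint operator with eigenvalues $(\lambda_k^\Omega)_{k\ge1}$ (counted with multiplicity, with respect to an orthonormal eigenbasis of $L^2(\mathbb{R}^d)$), all lying in $[0,B]$. $\#$ denotes cardinality. *)

theory Defs
  imports "HOL-Analysis.Analysis"
begin

text \<open>Phase space R^{2d} is modelled as pairs (x, omega) of vectors in R^d = real^'d.
  Elements of L^2(R^d) are represented by square-integrable functions real^'d => complex
  (equalities between them are taken almost everywhere).\<close>

type_synonym 'd phase = "(real^'d) \<times> (real^'d)"
type_synonym 'd fn = "real^'d \<Rightarrow> complex"

definition L2 :: "'d::finite fn \<Rightarrow> bool" where
  "L2 f \<longleftrightarrow> f \<in> borel_measurable lborel \<and> integrable lborel (\<lambda>t. (cmod (f t))\<^sup>2)"

definition l2_inner :: "'d::finite fn \<Rightarrow> 'd fn \<Rightarrow> complex" where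
  "l2_inner f h = (LINT t|lborel. f t * cnj (h t))"

definition l2_norm :: "'d::finite fn \<Rightarrow> real" where
  "l2_norm f = sqrt (LINT t|lborel. (cmod (f t))\<^sup>2)"

definition tfs :: "'d::finite phase \<Rightarrow> 'd fn \<Rightarrow> 'd fn" where
  "tfs z f = (\<lambda>t. exp (\<i> * complex_of_real (2 * pi * (snd z \<bullet> t))) * f (t - fst z))"

definition stft :: "'d::finite fn \<Rightarrow> 'd fn \<Rightarrow> 'd phase \<Rightarrow> complex" where
  "stft g f z = l2_inner f (tfs z g)"

definition int_points :: "'d::finite phase set" where
  "int_points = {z. (\<forall>i. fst z $ i \<in> \<int>) \<and> (\<forall>i. snd z $ i \<in> \<int>)}"

definition is_lattice :: "'d::finite phase set \<Rightarrow> bool" where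
  "is_lattice \<Lambda> \<longleftrightarrow> (\<exists>M::'d phase \<Rightarrow> 'd phase. linear M \<and> bij M \<and> \<Lambda> = M ` int_points)"

definition gabor_frame :: "'d::finite fn \<Rightarrow> 'd phase set \<Rightarrow> real \<Rightarrow> real \<Rightarrow> bool" where
  "gabor_frame g \<Lambda> A B \<longleftrightarrow> L2 g \<and> 0 < A \<and> 0 < B \<and>
     (\<forall>f. L2 f \<longrightarrow>
        (\<lambda>z. (cmod (stft g f z))\<^sup>2) summable_on \<Lambda> \<and>
        A * (l2_norm f)\<^sup>2 \<le> (\<Sum>\<^sub>\<infinity>z\<in>\<Lambda>. (cmod (stft g f z))\<^sup>2) \<and>
        (\<Sum>\<^sub>\<infinity>z\<in>\<Lambda>. (cmod (stft g f z))\<^sup>2) \<le> B * (l2_norm f)\<^sup>2)"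

text \<open>Gabor multiplier G f = sum_{lambda in Lambda} chi_Omega(lambda) V_g f(lambda) pi(lambda) g,
  i.e. the (finite) sum over Omega \<inter> Lambda.\<close>
definition gabor_mult :: "'d::finite fn \<Rightarrow> 'd phase set \<Rightarrow> 'd phase set \<Rightarrow> 'd fn \<Rightarrow> 'd fn" where
  "gabor_mult g \<Omega> \<Lambda> f = (\<lambda>t. \<Sum>z\<in>\<Omega> \<inter> \<Lambda>. stft g f z * tfs z g t)"

definition orthonormal_eigenbasis ::
  "('d::finite fn \<Rightarrow> 'd fn) \<Rightarrow> (nat \<Rightarrow> 'd fn) \<Rightarrow> (nat \<Rightarrow> real) \<Rightarrow> bool" where
  "orthonormal_eigenbasis T e lam \<longleftrightarrow>
     (\<forall>k. L2 (e k)) \<and>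
     (\<forall>j k. l2_inner (e j) (e k) = (if j = k then 1 else 0)) \<and>
     (\<forall>f. L2 f \<longrightarrow> (\<forall>\<epsilon>>0. \<exists>n c. l2_norm (\<lambda>t. f t - (\<Sum>k<n. c k * e k t)) < \<epsilon>)) \<and>
     (\<forall>k. AE t in lborel. T (e k) t = complex_of_real (lam k) * e k t)"

end

theory Submission
  imports Defs
begin

text \<open>The Gabor multiplier is the frame operator \<open>f \<mapsto> \<Sum>\<^sub>z \<langle>f, \<phi>\<^sub>z\<rangle> \<phi>\<^sub>z\<close> of the finite
  family \<open>\<phi>\<^sub>z = \<pi>(z) g\<close>, \<open>z \<in> \<Omega> \<inter> \<Lambda>\<close>. Hence its eigenvalues are
  \<open>\<lambda>\<^sub>k = \<Sum>\<^sub>z |\<langle>\<phi>\<^sub>z, e\<^sub>k\<rangle>|\<^sup>2\<close>, and Parseval's identity gives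
  \<open>\<Sum>\<^sub>k \<lambda>\<^sub>k = #(\<Omega> \<inter> \<Lambda>) \<parallel>g\<parallel>\<^sup>2\<close> and
  \<open>\<Sum>\<^sub>k \<lambda>\<^sub>k\<^sup>2 = \<Sum>\<^sub>z \<Sum>\<^sub>w |\<langle>\<phi>\<^sub>z, \<phi>\<^sub>w\<rangle>|\<^sup>2 = \<Sum>\<^sub>z \<Sum>\<^sub>w |V\<^sub>g g(z - w)|\<^sup>2\<close>.
  Here \<open>\<Omega> \<inter> \<Lambda>\<close> is finite because \<open>\<Omega>\<close> is compact and \<open>\<Lambda>\<close> is discrete.
  The upper frame bound gives \<open>0 \<le> \<lambda>\<^sub>k \<le> B\<close>, and for such numbers
  \<open>|B [\<lambda> > B(1 - \<delta>)] - \<lambda>| \<le> max (1/\<delta>) (1/(1 - \<delta>)) (\<lambda> - \<lambda>\<^sup>2/B)\<close>;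
  summing this over \<open>k\<close> gives the estimate.\<close>

section \<open>Square-integrable functions\<close>

lemma borel_measurable_cnj [measurable]:
  "h \<in> borel_measurable M \<Longrightarrow> (\<lambda>x. cnj (h x)) \<in> borel_measurable M"
  by (rule borel_measurable_continuous_on[where f=cnj]) (auto intro: continuous_intros)

lemma L2_measurable: "L2 f \<Longrightarrow> f \<in> borel_measurable borel"
  by (simp add: L2_def)

lemma integrable_L2_mult_cnj:
  assumes "L2 f" "L2 h"
  shows "integrable lborel (\<lambda>t. f t * cnj (h t))"
proof (rule Bochner_Integration.integrable_bound)
  have [measurable]: "f \<in> borel_measurable borel" "h \<in> borel_measurable borel"
    using assms by (auto simp: L2_measurable)
  show "(\<lambda>t. f t * cnj (h t)) \<in> borel_measurable lborel"
    by measurable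
  show "integrable lborel (\<lambda>t. (cmod (f t))\<^sup>2 + (cmod (h t))\<^sup>2)"
    using assms by (simp add: L2_def)
  have "cmod a * cmod b \<le> (cmod a)\<^sup>2 + (cmod b)\<^sup>2" for a b
    using sum_squares_bound[of "cmod a" "cmod b"] mult_nonneg_nonneg[OF norm_ge_zero norm_ge_zero, of a b]
    by linarith
  then show "AE t in lborel. norm (f t * cnj (h t)) \<le> norm ((cmod (f t))\<^sup>2 + (cmod (h t))\<^sup>2)"
    by (simp add: norm_mult)
qed

lemma L2_zero: "L2 (\<lambda>t. 0)"
  by (simp add: L2_def)

lemma L2_add:
  assumes "L2 f" "L2 h"
  shows "L2 (\<lambda>t. f t + h t)"
  unfolding L2_def
proof
  have [measurable]: "f \<in> borel_measurable borel" "h \<in> borel_measurable borel"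
    using assms by (auto simp: L2_measurable)
  show "(\<lambda>t. f t + h t) \<in> borel_measurable lborel"
    by measurable
  show "integrable lborel (\<lambda>t. (cmod (f t + h t))\<^sup>2)"
  proof (rule Bochner_Integration.integrable_bound)
    show "integrable lborel (\<lambda>t. 2 * (cmod (f t))\<^sup>2 + 2 * (cmod (h t))\<^sup>2)"
      using assms by (simp add: L2_def)
    show "(\<lambda>t. (cmod (f t + h t))\<^sup>2) \<in> borel_measurable lborel"
      by measurable
    have "(cmod (a + b))\<^sup>2 \<le> 2 * (cmod a)\<^sup>2 + 2 * (cmod b)\<^sup>2" for a b :: complex
    proof -
      have "(cmod (a + b))\<^sup>2 \<le> (cmod a + cmod b)\<^sup>2"
        by (simp add: power_mono norm_triangle_ineq)
      also have "\<dots> \<le> 2 * (cmod a)\<^sup>2 + 2 * (cmod b)\<^sup>2"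
        using sum_squares_bound[of "cmod a" "cmod b"] by (simp add: power2_sum)
      finally show ?thesis .
    qed
    then show "AE t in lborel. norm ((cmod (f t + h t))\<^sup>2) \<le> norm (2 * (cmod (f t))\<^sup>2 + 2 * (cmod (h t))\<^sup>2)"
      by simp
  qed
qed

lemma L2_mult_left: "L2 f \<Longrightarrow> L2 (\<lambda>t. c * f t)"
  by (auto simp: L2_def norm_mult power_mult_distrib)

lemma L2_diff: "L2 f \<Longrightarrow> L2 h \<Longrightarrow> L2 (\<lambda>t. f t - h t)"
  using L2_add[of f "\<lambda>t. -1 * h t"] L2_mult_left[of h "-1"] by simp

lemma L2_sum: "(\<And>k. k \<in> F \<Longrightarrow> L2 (u k)) \<Longrightarrow> L2 (\<lambda>t. \<Sum>k\<in>F. c k * u k t)"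
  by (induction F rule: infinite_finite_induct) (simp_all add: L2_zero L2_add L2_mult_left)

lemma l2_inner_cnj_commute: "l2_inner f h = cnj (l2_inner h f)"
  unfolding l2_inner_def
  by (subst Bochner_Integration.integral_cnj[symmetric]) (simp add: mult.commute)

lemma l2_inner_add_left:
  "L2 f \<Longrightarrow> L2 f' \<Longrightarrow> L2 h \<Longrightarrow> l2_inner (\<lambda>t. f t + f' t) h = l2_inner f h + l2_inner f' h"
  unfolding l2_inner_def by (simp add: distrib_right integrable_L2_mult_cnj)

lemma l2_inner_diff_left:
  "L2 f \<Longrightarrow> L2 f' \<Longrightarrow> L2 h \<Longrightarrow> l2_inner (\<lambda>t. f t - f' t) h = l2_inner f h - l2_inner f' h"
  unfolding l2_inner_def by (simp add: left_diff_distrib integrable_L2_mult_cnj)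

lemma l2_inner_mult_left: "l2_inner (\<lambda>t. c * f t) h = c * l2_inner f h"
  unfolding l2_inner_def by (simp add: mult.assoc)

lemma l2_inner_sum_left:
  assumes "\<And>k. k \<in> F \<Longrightarrow> L2 (u k)" "L2 h"
  shows "l2_inner (\<lambda>t. \<Sum>k\<in>F. c k * u k t) h = (\<Sum>k\<in>F. c k * l2_inner (u k) h)"
  using assms
proof (induction F rule: infinite_finite_induct)
  case (insert x F)
  then show ?case
    by (simp add: l2_inner_add_left L2_mult_left L2_sum l2_inner_mult_left)
qed (simp_all add: l2_inner_def)

lemma l2_inner_add_right:
  "L2 f \<Longrightarrow> L2 h \<Longrightarrow> L2 h' \<Longrightarrow> l2_inner f (\<lambda>t. h t + h' t) = l2_inner f h + l2_inner f h'"
  by (subst (1 2 3) l2_inner_cnj_commute) (simp add: l2_inner_add_left)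

lemma l2_inner_diff_right:
  "L2 f \<Longrightarrow> L2 h \<Longrightarrow> L2 h' \<Longrightarrow> l2_inner f (\<lambda>t. h t - h' t) = l2_inner f h - l2_inner f h'"
  by (subst (1 2 3) l2_inner_cnj_commute) (simp add: l2_inner_diff_left)

lemma l2_inner_mult_right: "l2_inner f (\<lambda>t. c * h t) = cnj c * l2_inner f h"
  by (subst (1 2) l2_inner_cnj_commute) (simp add: l2_inner_mult_left)

lemma l2_inner_sum_right:
  assumes "\<And>k. k \<in> F \<Longrightarrow> L2 (u k)" "L2 h"
  shows "l2_inner h (\<lambda>t. \<Sum>k\<in>F. c k * u k t) = (\<Sum>k\<in>F. cnj (c k) * l2_inner h (u k))"
  using l2_inner_sum_left[OF assms, where c=c]
  by (subst (1 2) l2_inner_cnj_commute) (simp add: l2_inner_cnj_commute[of h])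

lemma l2_inner_self: "l2_inner f f = complex_of_real ((l2_norm f)\<^sup>2)"
proof -
  have "l2_inner f f = (LINT t|lborel. complex_of_real ((cmod (f t))\<^sup>2))"
    unfolding l2_inner_def by (simp only: complex_norm_square)
  moreover have "(l2_norm f)\<^sup>2 = (LINT t|lborel. (cmod (f t))\<^sup>2)"
    by (simp add: l2_norm_def)
  ultimately show ?thesis
    by (simp only: integral_complex_of_real)
qed

lemma l2_inner_cong_AE:
  assumes "L2 f" "L2 f'" "L2 h" "AE t in lborel. f t = f' t"
  shows "l2_inner f h = l2_inner f' h"
proof -
  have [measurable]: "f \<in> borel_measurable borel" "f' \<in> borel_measurable borel"
    "h \<in> borel_measurable borel"
    using assms by (auto simp: L2_measurable)
  show ?thesis
    unfolding l2_inner_def by (rule integral_cong_AE) (use assms(4) in \<open>auto elim!: AE_mp\<close>)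
qed

lemma polarization_identity:
  fixes q :: "complex \<Rightarrow> complex"
  assumes "\<And>c. q c = P + cnj c * X + c * Y + c * cnj c * R"
  shows "(q 1 + \<i> * q \<i> - q (-1) - \<i> * q (-\<i>)) / 4 = X"
  by (simp add: assms complex_eq_iff algebra_simps)

section \<open>Orthonormal bases and Parseval's identity\<close>

locale l2_orthonormal_basis =
  fixes e :: "nat \<Rightarrow> 'd::finite fn"
  assumes L2_basis: "L2 (e k)"
    and inner_basis: "l2_inner (e j) (e k) = (if j = k then 1 else 0)"
    and basis_complete: "L2 f \<Longrightarrow> \<epsilon> > 0 \<Longrightarrow> \<exists>n c. l2_norm (\<lambda>t. f t - (\<Sum>k<n. c k * e k t)) < \<epsilon>"
begin

lemma l2_norm_basis: "l2_norm (e k) = 1"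
  using inner_basis[of k k] l2_inner_self[of "e k"] by (simp add: l2_norm_def)

lemma inner_sum_basis:
  "l2_inner (\<lambda>t. \<Sum>k<n. c k * e k t) (\<lambda>t. \<Sum>k<n. d k * e k t) = (\<Sum>k<n. c k * cnj (d k))"
proof -
  have "l2_inner (\<lambda>t. \<Sum>k<n. c k * e k t) (\<lambda>t. \<Sum>k<n. d k * e k t)
      = (\<Sum>k<n. c k * (\<Sum>j<n. cnj (d j) * l2_inner (e k) (e j)))"
    by (simp add: l2_inner_sum_left l2_inner_sum_right L2_basis L2_sum)
  also have "\<dots> = (\<Sum>k<n. c k * cnj (d k))"
    by (simp add: inner_basis if_distrib sum.delta cong: if_cong)
  finally show ?thesis .
qed

lemma l2_norm_diff_sum_basis_sq:
  assumes "L2 f"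
  shows "(l2_norm (\<lambda>t. f t - (\<Sum>k<n. c k * e k t)))\<^sup>2
       = (l2_norm f)\<^sup>2 - (\<Sum>k<n. (cmod (l2_inner f (e k)))\<^sup>2) + (\<Sum>k<n. (cmod (c k - l2_inner f (e k)))\<^sup>2)"
proof -
  define a where "a k = l2_inner f (e k)" for k
  define s where "s = (\<lambda>t. \<Sum>k<n. c k * e k t)"
  have s: "L2 s"
    unfolding s_def by (rule L2_sum) (simp add: L2_basis)
  have fs: "l2_inner f s = (\<Sum>k<n. cnj (c k) * a k)"
    unfolding s_def a_def by (rule l2_inner_sum_right) (simp_all add: L2_basis assms)
  have sf: "l2_inner s f = (\<Sum>k<n. c k * cnj (a k))"
    unfolding s_def a_def
    by (subst l2_inner_sum_left) (simp_all add: L2_basis assms l2_inner_cnj_commute[of f])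
  have ss: "l2_inner s s = (\<Sum>k<n. c k * cnj (c k))"
    unfolding s_def by (rule inner_sum_basis)
  have "complex_of_real ((l2_norm (\<lambda>t. f t - s t))\<^sup>2) = l2_inner (\<lambda>t. f t - s t) (\<lambda>t. f t - s t)"
    by (simp add: l2_inner_self)
  also have "\<dots> = l2_inner f f - l2_inner f s - l2_inner s f + l2_inner s s"
    using assms s by (simp add: l2_inner_diff_left l2_inner_diff_right L2_diff)
  also have "\<dots> = l2_inner f f - (\<Sum>k<n. a k * cnj (a k)) + (\<Sum>k<n. (c k - a k) * cnj (c k - a k))"
    unfolding fs sf ss
    by (simp add: algebra_simps sum.distrib sum_subtractf)
  also have "\<dots> = complex_of_real ((l2_norm f)\<^sup>2 - (\<Sum>k<n. (cmod (a k))\<^sup>2) + (\<Sum>k<n. (cmod (c k - a k))\<^sup>2))"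
    by (simp only: l2_inner_self of_real_add of_real_diff of_real_sum complex_norm_square)
  finally show ?thesis
    unfolding s_def a_def of_real_eq_iff .
qed

lemma parseval:
  assumes "L2 f"
  shows "(\<lambda>k. (cmod (l2_inner f (e k)))\<^sup>2) sums (l2_norm f)\<^sup>2"
proof -
  define a where "a k = (cmod (l2_inner f (e k)))\<^sup>2" for k
  have bessel: "(\<Sum>k<n. a k) \<le> (l2_norm f)\<^sup>2" for n
    using l2_norm_diff_sum_basis_sq[OF assms, where n=n and c="\<lambda>k. l2_inner f (e k)"]
      zero_le_power2[of "l2_norm (\<lambda>t. f t - (\<Sum>k<n. l2_inner f (e k) * e k t))"]
    unfolding a_def by simp
  have summable: "summable a"
    by (rule summableI_nonneg_bounded[OF _ bessel]) (simp add: a_def)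
  have "(l2_norm f)\<^sup>2 \<le> suminf a"
  proof (rule field_le_epsilon)
    fix \<epsilon> :: real
    assume "\<epsilon> > 0"
    then obtain n c where approx: "l2_norm (\<lambda>t. f t - (\<Sum>k<n. c k * e k t)) < sqrt \<epsilon>"
      using basis_complete[OF assms, of "sqrt \<epsilon>"] by auto
    have "(l2_norm (\<lambda>t. f t - (\<Sum>k<n. c k * e k t)))\<^sup>2 < \<epsilon>"
      using power_strict_mono[OF approx, of 2] \<open>\<epsilon> > 0\<close> by (simp add: l2_norm_def)
    then have "(l2_norm f)\<^sup>2 - (\<Sum>k<n. a k) < \<epsilon>"
      using l2_norm_diff_sum_basis_sq[OF assms, where n=n and c=c]
        sum_nonneg[of "{..<n}" "\<lambda>k. (cmod (c k - l2_inner f (e k)))\<^sup>2"]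
      unfolding a_def by simp
    moreover have "(\<Sum>k<n. a k) \<le> suminf a"
      by (rule sum_le_suminf[OF summable]) (simp_all add: a_def)
    ultimately show "(l2_norm f)\<^sup>2 \<le> suminf a + \<epsilon>"
      by simp
  qed
  with summable suminf_le_const[OF summable bessel] show ?thesis
    unfolding a_def[symmetric] by (simp add: sums_iff)
qed

lemma parseval_inner:
  assumes f: "L2 f" and h: "L2 h"
  shows "(\<lambda>k. l2_inner f (e k) * cnj (l2_inner h (e k))) sums l2_inner f h"
proof -
  define a b where "a k = l2_inner f (e k)" and "b k = l2_inner h (e k)" for k
  \<comment> \<open>Parseval for \<open>f + c h\<close>, \<open>c \<in> {\<plusminus>1, \<plusminus>\<i>}\<close>, combined by polarization.\<close>
  define q where "q k c = complex_of_real ((cmod (a k + c * b k))\<^sup>2)" for k c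
  define Q where "Q c = complex_of_real ((l2_norm (\<lambda>t. f t + c * h t))\<^sup>2)" for c
  have q_expand: "q k c = a k * cnj (a k) + cnj c * (a k * cnj (b k)) + c * (b k * cnj (a k))
      + c * cnj c * (b k * cnj (b k))" for k c
    unfolding q_def complex_norm_square by (simp add: algebra_simps)
  have Q_expand: "Q c = l2_inner f f + cnj c * l2_inner f h + c * l2_inner h f + c * cnj c * l2_inner h h"
    for c
  proof -
    have "Q c = l2_inner (\<lambda>t. f t + c * h t) (\<lambda>t. f t + c * h t)"
      unfolding Q_def l2_inner_self ..
    also have "\<dots> = l2_inner f f + cnj c * l2_inner f h + c * l2_inner h f + c * cnj c * l2_inner h h"
      using f h by (simp add: l2_inner_add_left l2_inner_add_right l2_inner_mult_left
          l2_inner_mult_right L2_add L2_mult_left algebra_simps)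
    finally show ?thesis .
  qed
  have "(\<lambda>k. q k c) sums Q c" for c
  proof -
    have "l2_inner (\<lambda>t. f t + c * h t) (e k) = a k + c * b k" for k
      unfolding a_def b_def using f h
      by (simp add: l2_inner_add_left l2_inner_mult_left L2_mult_left L2_basis)
    then show ?thesis
      using parseval[OF L2_add[OF f L2_mult_left[OF h, where c=c]]]
      unfolding q_def Q_def sums_of_real_iff by simp
  qed
  then have "(\<lambda>k. (q k 1 + \<i> * q k \<i> - q k (-1) - \<i> * q k (-\<i>)) / 4)
      sums ((Q 1 + \<i> * Q \<i> - Q (-1) - \<i> * Q (-\<i>)) / 4)"
    by (intro sums_divide sums_diff sums_add sums_mult)
  then show ?thesis
    unfolding polarization_identity[OF q_expand] polarization_identity[OF Q_expand] a_def b_def .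
qed

end

section \<open>Frame operators of finite families\<close>

definition frame_operator :: "('a \<Rightarrow> 'd::finite fn) \<Rightarrow> 'a set \<Rightarrow> 'd fn \<Rightarrow> 'd fn" where
  "frame_operator \<phi> S f = (\<lambda>t. \<Sum>z\<in>S. l2_inner f (\<phi> z) * \<phi> z t)"

locale frame_operator_eigenbasis = l2_orthonormal_basis e
  for e :: "nat \<Rightarrow> 'd::finite fn" +
  fixes \<phi> :: "'a \<Rightarrow> 'd fn" and S :: "'a set" and lam :: "nat \<Rightarrow> real"
  assumes L2_family: "z \<in> S \<Longrightarrow> L2 (\<phi> z)"
    and eigenvector: "AE t in lborel. frame_operator \<phi> S (e k) t = complex_of_real (lam k) * e k t"
begin

lemma eigenvalue_mult_inner:
  assumes "L2 h"
  shows "complex_of_real (lam k) * l2_inner (e k) h = (\<Sum>z\<in>S. l2_inner (e k) (\<phi> z) * l2_inner (\<phi> z) h)"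
proof -
  have "complex_of_real (lam k) * l2_inner (e k) h = l2_inner (frame_operator \<phi> S (e k)) h"
    unfolding l2_inner_mult_left[symmetric]
    by (rule l2_inner_cong_AE)
      (use eigenvector[of k] in \<open>auto simp: assms L2_basis L2_mult_left L2_family L2_sum
        frame_operator_def elim: AE_mp\<close>)
  also have "\<dots> = (\<Sum>z\<in>S. l2_inner (e k) (\<phi> z) * l2_inner (\<phi> z) h)"
    unfolding frame_operator_def by (rule l2_inner_sum_left) (simp_all add: L2_family assms)
  finally show ?thesis .
qed

lemma eigenvalue_eq: "lam k = (\<Sum>z\<in>S. (cmod (l2_inner (\<phi> z) (e k)))\<^sup>2)"
proof -
  have "complex_of_real (lam k) = (\<Sum>z\<in>S. l2_inner (\<phi> z) (e k) * cnj (l2_inner (\<phi> z) (e k)))"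
    using eigenvalue_mult_inner[OF L2_basis, of k k]
    by (simp add: inner_basis l2_inner_cnj_commute[of "e k"] mult.commute)
  then show ?thesis
    unfolding complex_norm_square[symmetric] of_real_sum[symmetric] of_real_eq_iff .
qed

lemma eigenvalue_nonneg: "0 \<le> lam k"
  unfolding eigenvalue_eq by (simp add: sum_nonneg)

lemma eigenvalues_sums: "lam sums (\<Sum>z\<in>S. (l2_norm (\<phi> z))\<^sup>2)"
  unfolding eigenvalue_eq[abs_def] by (intro sums_sum parseval L2_family)

lemma eigenvalues_sq_sums:
  "(\<lambda>k. (lam k)\<^sup>2) sums (\<Sum>z\<in>S. \<Sum>w\<in>S. (cmod (l2_inner (\<phi> z) (\<phi> w)))\<^sup>2)"
proof -
  define p where "p z k = l2_inner (\<phi> z) (e k)" for z k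
  have inner_sq: "l2_inner (\<phi> w) (\<phi> z) * l2_inner (\<phi> z) (\<phi> w)
      = complex_of_real ((cmod (l2_inner (\<phi> z) (\<phi> w)))\<^sup>2)" for z w
    unfolding complex_norm_square l2_inner_cnj_commute[of "\<phi> w" "\<phi> z"] by (rule mult.commute)
  have lam_expand: "complex_of_real (lam k) = (\<Sum>z\<in>S. l2_inner (e k) (\<phi> z) * p z k)" for k
    using eigenvalue_mult_inner[OF L2_basis, of k k] by (simp add: inner_basis p_def)
  have "complex_of_real ((lam k)\<^sup>2) = complex_of_real (lam k) * (\<Sum>z\<in>S. l2_inner (e k) (\<phi> z) * p z k)"
    for k
    unfolding lam_expand[symmetric] by (simp add: power2_eq_square)
  also have "\<dots>k = (\<Sum>z\<in>S. \<Sum>w\<in>S. l2_inner (e k) (\<phi> w) * l2_inner (\<phi> w) (\<phi> z) * p z k)" for k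
    by (simp add: sum_distrib_left sum_distrib_right mult.assoc[symmetric] eigenvalue_mult_inner
        L2_family)
  also have "\<dots>k = (\<Sum>z\<in>S. \<Sum>w\<in>S. l2_inner (\<phi> w) (\<phi> z) * (p z k * cnj (p w k)))" for k
    by (simp add: p_def l2_inner_cnj_commute[of "e k"] algebra_simps)
  finally have "(\<lambda>k. complex_of_real ((lam k)\<^sup>2))
      sums (\<Sum>z\<in>S. \<Sum>w\<in>S. l2_inner (\<phi> w) (\<phi> z) * l2_inner (\<phi> z) (\<phi> w))"
    unfolding p_def by (simp only:) (intro sums_sum sums_mult parseval_inner L2_family)
  then show ?thesis
    unfolding inner_sq of_real_sum[symmetric] sums_of_real_iff .
qed

end

section \<open>Time-frequency shifts\<close>

lemma integrable_lborel_translate_iff: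
  fixes F :: "'a::euclidean_space \<Rightarrow> 'b::{banach,second_countable_topology}"
  assumes "F \<in> borel_measurable borel"
  shows "integrable lborel (\<lambda>x. F (x + c)) \<longleftrightarrow> integrable lborel F"
  using integrable_distr_eq[of "(+) c" lborel borel F] assms
  by (simp add: lborel_distr_plus add.commute)

lemma integral_lborel_translate:
  fixes F :: "'a::euclidean_space \<Rightarrow> 'b::{banach,second_countable_topology}"
  assumes "F \<in> borel_measurable borel"
  shows "(LINT x|lborel. F (x + c)) = integral\<^sup>L lborel F"
  using integral_distr[of "(+) c" lborel borel F] assms
  by (simp add: lborel_distr_plus add.commute)

lemma tfs_eq_cis: "tfs z g t = cis (2 * pi * (snd z \<bullet> t)) * g (t - fst z)"
  by (simp add: tfs_def cis_conv_exp)

lemma norm_tfs: "cmod (tfs z g t) = cmod (g (t - fst z))"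
  by (simp add: tfs_eq_cis norm_mult)

lemma L2_tfs:
  assumes "L2 g"
  shows "L2 (tfs z g)"
  unfolding L2_def
proof
  have [measurable]: "g \<in> borel_measurable borel"
    using assms by (rule L2_measurable)
  show "tfs z g \<in> borel_measurable lborel"
    unfolding tfs_def by measurable
  have "integrable lborel (\<lambda>t. (cmod (g (t + - fst z)))\<^sup>2)"
    using assms by (subst integrable_lborel_translate_iff) (simp_all add: L2_def)
  then show "integrable lborel (\<lambda>t. (cmod (tfs z g t))\<^sup>2)"
    by (simp add: norm_tfs)
qed

lemma l2_norm_tfs:
  assumes "L2 g"
  shows "l2_norm (tfs z g) = l2_norm g"
proof -
  have [measurable]: "g \<in> borel_measurable borel"
    using assms by (rule L2_measurable)
  have "(LINT t|lborel. (cmod (g (t + - fst z)))\<^sup>2) = (LINT t|lborel. (cmod (g t))\<^sup>2)"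
    by (rule integral_lborel_translate) measurable
  then show ?thesis
    by (simp add: l2_norm_def norm_tfs)
qed

lemma norm_l2_inner_tfs:
  assumes "L2 g"
  shows "cmod (l2_inner (tfs z g) (tfs w g)) = cmod (stft g g (z - w))"
proof -
  define \<omega> where "\<omega> = snd z - snd w"
  have [measurable]: "g \<in> borel_measurable borel"
    using assms by (rule L2_measurable)
  have translate: "tfs z g (s + fst w) * cnj (tfs w g (s + fst w))
      = cis (2 * pi * (\<omega> \<bullet> fst w)) * cnj (g s * cnj (tfs (z - w) g s))" for s
    by (simp add: tfs_eq_cis \<omega>_def cis_cnj cis_mult inner_diff_left inner_add_right algebra_simps)
  have "l2_inner (tfs z g) (tfs w g) = (LINT s|lborel. tfs z g (s + fst w) * cnj (tfs w g (s + fst w)))"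
    unfolding l2_inner_def by (rule integral_lborel_translate[symmetric]) (simp add: tfs_def)
  also have "\<dots> = (LINT s|lborel. cis (2 * pi * (\<omega> \<bullet> fst w)) * cnj (g s * cnj (tfs (z - w) g s)))"
    by (simp only: translate)
  also have "\<dots> = cis (2 * pi * (\<omega> \<bullet> fst w)) * cnj (stft g g (z - w))"
    unfolding stft_def l2_inner_def by (simp only: integral_mult_right_zero Bochner_Integration.integral_cnj)
  finally show ?thesis
    by (simp add: norm_mult)
qed

section \<open>Lattice points in compact sets\<close>

lemma finite_vec_components: "finite F \<Longrightarrow> finite {x::'a^'n::finite. \<forall>i. x $ i \<in> F}"
  by (rule finite_subset[of _ "vec_lambda ` (\<Pi>\<^sub>E i\<in>UNIV. F)"])
    (auto intro!: finite_imageI finite_PiE image_eqI[where x="\<lambda>i. _ $ i"])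

lemma finite_int_points_inter_bounded:
  assumes "bounded K"
  shows "finite (int_points \<inter> K)"
proof -
  obtain r where r: "\<And>z. z \<in> K \<Longrightarrow> norm z \<le> r"
    using assms by (auto simp: bounded_iff)
  define V where "V = {x::real^'a. \<forall>i. x $ i \<in> {k \<in> \<int>. \<bar>k\<bar> \<le> r}}"
  have "\<bar>fst z $ i\<bar> \<le> r" "\<bar>snd z $ i\<bar> \<le> r" if "z \<in> K" for z i
    using component_le_norm_cart[of "fst z" i] component_le_norm_cart[of "snd z" i]
      norm_fst_le[of "fst z" "snd z"] norm_snd_le[of "snd z" "fst z"] r[OF that] by simp_all
  then have "int_points \<inter> K \<subseteq> V \<times> V"
    by (auto simp: int_points_def V_def)
  moreover have "finite V"
    unfolding V_def by (intro finite_vec_components finite_abs_int_segment)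
  ultimately show ?thesis
    by (meson finite_SigmaI finite_subset)
qed

lemma finite_compact_inter_lattice:
  fixes \<Lambda> \<Omega> :: "'d::finite phase set"
  assumes "is_lattice \<Lambda>" "compact \<Omega>"
  shows "finite (\<Omega> \<inter> \<Lambda>)"
proof -
  obtain M :: "'d phase \<Rightarrow> 'd phase" where M: "linear M" "bij M" "\<Lambda> = M ` int_points"
    using assms(1) unfolding is_lattice_def by blast
  obtain c where c: "c > 0" "\<And>x. c * norm x \<le> norm (M x)"
    using linear_inj_bounded_below_pos[OF M(1) bij_is_inj[OF M(2)]] by blast
  obtain r where r: "\<And>y. y \<in> \<Omega> \<Longrightarrow> norm y \<le> r"
    using compact_imp_bounded[OF assms(2)] by (auto simp: bounded_iff)
  have "\<Omega> \<inter> \<Lambda> \<subseteq> M ` (int_points \<inter> cball 0 (r / c))"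
  proof
    fix y
    assume y: "y \<in> \<Omega> \<inter> \<Lambda>"
    then obtain x where x: "x \<in> int_points" "y = M x"
      using M(3) by blast
    have "c * norm x \<le> r"
      using c(2)[of x] r y x(2) by fastforce
    then have "norm x \<le> r / c"
      using c(1) by (simp add: field_simps mult.commute)
    with x show "y \<in> M ` (int_points \<inter> cball 0 (r / c))"
      by auto
  qed
  then show ?thesis
    by (rule finite_subset) (intro finite_imageI finite_int_points_inter_bounded bounded_cball)
qed

section \<open>Counting eigenvalues above a threshold\<close>

lemma threshold_pointwise_le:
  fixes l B \<delta> :: real
  assumes l: "0 \<le> l" "l \<le> B" and B: "0 < B" and \<delta>: "0 < \<delta>" "\<delta> < 1"
  shows "\<bar>(if B * (1 - \<delta>) < l then B else 0) - l\<bar> \<le> max (1 / \<delta>) (1 / (1 - \<delta>)) * (l - l\<^sup>2 / B)"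
proof -
  have gap: "l - l\<^sup>2 / B = l * (B - l) / B"
    using B by (simp add: power2_eq_square field_simps)
  have "0 \<le> l - l\<^sup>2 / B"
    unfolding gap using l B by simp
  moreover have "\<bar>(if B * (1 - \<delta>) < l then B else 0) - l\<bar>
      \<le> (if B * (1 - \<delta>) < l then 1 / (1 - \<delta>) else 1 / \<delta>) * (l - l\<^sup>2 / B)"
  proof (cases "B * (1 - \<delta>) < l")
    case True
    then have "(B - l) * (B * (1 - \<delta>)) \<le> (B - l) * l"
      using l by (intro mult_left_mono) auto
    then show ?thesis
      using True l B \<delta> unfolding gap by (simp add: field_simps)
  next
    case False
    then have "l * (B * \<delta>) \<le> l * (B - l)"
      using l by (intro mult_left_mono) (auto simp: algebra_simps)
    then show ?thesis
      using False l B \<delta> unfolding gap by (simp add: field_simps)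
  qed
  moreover have "(if B * (1 - \<delta>) < l then 1 / (1 - \<delta>) else 1 / \<delta>) \<le> max (1 / \<delta>) (1 / (1 - \<delta>))"
    by simp
  ultimately show ?thesis
    by (meson mult_right_mono order_trans)
qed

lemma threshold_count_estimate:
  fixes lam :: "nat \<Rightarrow> real"
  assumes lam: "\<And>k. 0 \<le> lam k" "\<And>k. lam k \<le> B" and B: "0 < B" and \<delta>: "0 < \<delta>" "\<delta> < 1"
    and X: "lam sums X" and Y: "(\<lambda>k. (lam k)\<^sup>2) sums Y"
  shows "\<bar>B * real (card {k. lam k > B * (1 - \<delta>)}) - X\<bar>
    \<le> max (1 / \<delta>) (1 / (1 - \<delta>)) * \<bar>X - (1 / B) * Y\<bar>"
proof -
  define T where "T = {k. B * (1 - \<delta>) < lam k}"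
  define M where "M = max (1 / \<delta>) (1 / (1 - \<delta>))"
  define u where "u k = (if B * (1 - \<delta>) < lam k then B else 0) - lam k" for k
  define h where "h k = M * (lam k - (lam k)\<^sup>2 / B)" for k
  have "lam \<longlonglongrightarrow> 0"
    using X summable_LIMSEQ_zero sums_summable by blast
  then obtain N where N: "\<And>k. k \<ge> N \<Longrightarrow> lam k < B * (1 - \<delta>)"
    using order_tendstoD(2)[of lam 0 sequentially "B * (1 - \<delta>)"] B \<delta>
    by (auto simp: eventually_sequentially)
  have "T \<subseteq> {..<N}"
    unfolding T_def using N by (auto intro: ccontr dest: leI order.asym)
  then have "finite T"
    by (rule finite_subset) simp
  have "(\<lambda>k. if k \<in> T then B else 0) sums (\<Sum>k\<in>T. B)"
    using \<open>finite T\<close> by (rule sums_If_finite_set)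
  then have u: "u sums (B * real (card T) - X)"
    unfolding u_def T_def using X by (simp add: sums_diff mult.commute)
  have h: "h sums (M * (X - (1 / B) * Y))"
    unfolding h_def using sums_mult[OF sums_diff[OF X sums_divide[OF Y, of B]], of M] by simp
  have "\<bar>u k\<bar> \<le> h k" for k
    unfolding u_def h_def M_def using lam B \<delta> by (rule threshold_pointwise_le)
  then have bound: "u k \<le> h k" "- u k \<le> h k" for k
    by (simp_all add: abs_le_iff)
  have "B * real (card T) - X \<le> M * (X - (1 / B) * Y)"
    by (rule sums_le[OF bound(1) u h])
  moreover have "- (B * real (card T) - X) \<le> M * (X - (1 / B) * Y)"
    by (rule sums_le[OF bound(2) sums_minus[OF u] h])
  ultimately have "\<bar>B * real (card T) - X\<bar> \<le> M * (X - (1 / B) * Y)"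
    by linarith
  also have "\<dots> \<le> M * \<bar>X - (1 / B) * Y\<bar>"
    using \<delta> by (intro mult_left_mono) (auto simp: M_def le_max_iff_disj)
  finally show ?thesis
    unfolding T_def M_def .
qed

lemma gabor_mult_eq_frame_operator: "gabor_mult g \<Omega> \<Lambda> = frame_operator (\<lambda>z. tfs z g) (\<Omega> \<inter> \<Lambda>)"
  by (simp add: fun_eq_iff gabor_mult_def frame_operator_def stft_def)

lemma gabor_frame_sum_le:
  assumes "gabor_frame g \<Lambda> A B" "finite S" "S \<subseteq> \<Lambda>" "L2 f"
  shows "(\<Sum>z\<in>S. (cmod (stft g f z))\<^sup>2) \<le> B * (l2_norm f)\<^sup>2"
proof -
  have summable: "(\<lambda>z. (cmod (stft g f z))\<^sup>2) summable_on \<Lambda>"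
    and upper: "(\<Sum>\<^sub>\<infinity>z\<in>\<Lambda>. (cmod (stft g f z))\<^sup>2) \<le> B * (l2_norm f)\<^sup>2"
    using assms(1,4) by (auto simp: gabor_frame_def)
  have "(\<Sum>z\<in>S. (cmod (stft g f z))\<^sup>2) = (\<Sum>\<^sub>\<infinity>z\<in>S. (cmod (stft g f z))\<^sup>2)"
    using assms(2) by simp
  also have "\<dots> \<le> (\<Sum>\<^sub>\<infinity>z\<in>\<Lambda>. (cmod (stft g f z))\<^sup>2)"
    using assms(2,3) summable by (intro infsum_mono_neutral) auto
  finally show ?thesis
    using upper by linarith
qed

theorem lemma2p6:
  fixes g :: "'d::finite fn" and \<Lambda> \<Omega> :: "'d phase set" and A B \<delta> :: real
    and e :: "nat \<Rightarrow> 'd fn" and lam :: "nat \<Rightarrow> real"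
  assumes "is_lattice \<Lambda>"
    and "gabor_frame g \<Lambda> A B"
    and "compact \<Omega>"
    and "orthonormal_eigenbasis (gabor_mult g \<Omega> \<Lambda>) e lam"
    and "0 < \<delta>" and "\<delta> < 1"
  shows "\<bar>B * real (card {k. lam k > B * (1 - \<delta>)}) - real (card (\<Omega> \<inter> \<Lambda>)) * (l2_norm g)\<^sup>2\<bar>
     \<le> max (1 / \<delta>) (1 / (1 - \<delta>)) *
        \<bar>real (card (\<Omega> \<inter> \<Lambda>)) * (l2_norm g)\<^sup>2
          - (1 / B) * (\<Sum>z\<in>\<Omega> \<inter> \<Lambda>. \<Sum>w\<in>\<Omega> \<inter> \<Lambda>. (cmod (stft g g (z - w)))\<^sup>2)\<bar>"
proof -
  have g: "L2 g" and B: "0 < B"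
    using assms(2) by (auto simp: gabor_frame_def)
  interpret frame_operator_eigenbasis e "\<lambda>z. tfs z g" "\<Omega> \<inter> \<Lambda>" lam
    using assms(4) L2_tfs[OF g]
    by unfold_locales (auto simp: orthonormal_eigenbasis_def gabor_mult_eq_frame_operator)
  have "lam k \<le> B" for k
  proof -
    have "cmod (l2_inner (tfs z g) (e k)) = cmod (stft g (e k) z)" for z
      by (simp add: stft_def l2_inner_cnj_commute[of "tfs z g"])
    then have "lam k = (\<Sum>z\<in>\<Omega> \<inter> \<Lambda>. (cmod (stft g (e k) z))\<^sup>2)"
      by (simp add: eigenvalue_eq)
    also have "\<dots> \<le> B"
      using gabor_frame_sum_le[OF assms(2) finite_compact_inter_lattice[OF assms(1,3)] Int_lower2 L2_basis]
      by (simp add: l2_norm_basis)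
    finally show ?thesis .
  qed
  then show ?thesis
    using threshold_count_estimate[OF eigenvalue_nonneg _ B assms(5,6) eigenvalues_sums eigenvalues_sq_sums]
    by (simp add: l2_norm_tfs[OF g] norm_l2_inner_tfs[OF g])
qed

end
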